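(* Suppose A1–A3 and A4' hold and let $\{x_k\}$ be generated by Algorithm 1. Let $k_1=n_0(\kappa_c/2)$, where for $\delta>0$, $n_0(\delta)=\min\{n\in\mathbb{N}:\ \nu_k\le\delta\|\nabla f(x_k)\|^2\ \text{for all } k\ge n\}$ (well defined by A4'). Then for every $\epsilon>0$ the set $\Omega_\epsilon=\{k\in\mathbb{N}:\ \|\nabla f(x_k)\|>\epsilon\}$ is finite and $$|\Omega_\epsilon|\le k_1+\left[\frac{2\left(f(x_0)-f_{low}+\sum_{i=0}^{k_1-1}\nu_i\right)}{\kappa_c}\right]\epsilon^{-2}.$$
   Context: Let $(X,\langle\cdot,\cdot\rangle)$ be a real Hilbert space with induced norm $\|\cdot\|$, and $f:X\to\mathbb{R}$ Fréchet differentiable with gradient $\nabla f$. Algorithm 1 (general non-monotone descent algorithm): parameters $x_0\in X$, $\alpha_0>0$, $\beta,\rho\in(0,1)$. For $k=0,1,2,\dots$: choose $d_k\in X$ with $\langle\nabla f(x_k),d_k\rangle<0$; then for $l=0,1,2,\dots$ choose a number $\nu_{k,l}\ge 0$ and test $$f(x_k+\alpha_k\beta^l d_k)\le f(x_k)+\rho\alpha_k\beta^l\langle\nabla f(x_k),d_k\rangle+\nu_{k,l};$$ let $l_k$ be the first $l$ for which this holds, set $\nu_k:=\nu_{k,l_k}$, $x_{k+1}=x_k+\alpha_k\beta^{l_k}d_k$ and $\alpha_{k+1}=\alpha_k\beta^{l_k-1}$. It is assumed the algorithm generates infinite sequences (all $l_k$ finite). Assumptions: A1: $\nabla f$ is Lipschitz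 continuous with constant $L>0$. A2: there is $f_{low}\in\mathbb{R}$ with $f(x)\ge f_{low}$ for all $x\in X$. A3: there are constants $c_1,c_2>0$ with $\langle\nabla f(x_k),d_k\rangle\le -c_1\|\nabla f(x_k)\|^2$ and $\|d_k\|\le c_2\|\nabla f(x_k)\|$ for all $k$. A4': $\nu_k=o(\|\nabla f(x_k)\|^2)$, i.e. for every $\delta>0$ there is $n\in\mathbb{N}$ with $\nu_k\le\delta\|\nabla f(x_k)\|^2$ for all $k\ge n$. Constant: $\kappa_c=\min\left\{\rho\beta\alpha_0c_1,\ \frac{2\beta\rho(1-\rho)c_1^2}{Lc_2^2}\right\}$. *)

theory Defs
  imports "HOL-Analysis.Analysis"
begin

end

theory Submission
  imports Defs
begin

text \<open>
  By the descent lemma for a gradient with Lipschitz constant \<open>L\<close>, every step rejected by the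
  line search is larger than \<open>M = 2(1 - \<rho>)c\<^sub>1/(L c\<^sub>2\<^sup>2)\<close>. The next trial step \<open>\<alpha>\<^sub>k\<^sub>+\<^sub>1\<close> is either
  the last rejected step or \<open>\<alpha>\<^sub>k/\<beta>\<close>, so \<open>\<alpha>\<^sub>k \<ge> min(\<alpha>\<^sub>0, M)\<close>, and the accepted step \<open>\<beta>\<alpha>\<^sub>k\<^sub>+\<^sub>1\<close> makes
  \<open>f\<close> drop by at least \<open>\<kappa>\<^sub>c\<parallel>\<nabla>f(x\<^sub>k)\<parallel>\<^sup>2 - \<nu>\<^sub>k\<close>; from \<open>k\<^sub>1\<close> on, by at least \<open>\<kappa>\<^sub>c\<parallel>\<nabla>f(x\<^sub>k)\<parallel>\<^sup>2/2\<close>.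
  Telescoping, the squared gradient norms from \<open>k\<^sub>1\<close> on sum to at most
  \<open>2(f(x\<^sub>0) - f\<^sub>l\<^sub>o\<^sub>w + \<Sum>\<^sub>i\<^sub><\<^sub>k\<^sub>1 \<nu>\<^sub>i)/\<kappa>\<^sub>c\<close>, which bounds \<open>\<epsilon>\<^sup>2\<close> times the number of them exceeding \<open>\<epsilon>\<^sup>2\<close>.
\<close>

lemma descent_lemma:
  fixes f :: "'a::real_inner \<Rightarrow> real" and gf :: "'a \<Rightarrow> 'a"
  assumes grad: "\<And>y. (f has_derivative (\<lambda>h. gf y \<bullet> h)) (at y)"
    and lip: "\<And>y z. norm (gf y - gf z) \<le> L * norm (y - z)"
  shows "f (y + h) \<le> f y + gf y \<bullet> h + L / 2 * (norm h)\<^sup>2"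
proof -
  define \<psi> where "\<psi> t = f (y + t *\<^sub>R h) - t * (gf y \<bullet> h) - L / 2 * t\<^sup>2 * (norm h)\<^sup>2" for t :: real
  have deriv_line: "((\<lambda>t. f (y + t *\<^sub>R h)) has_real_derivative (gf (y + t *\<^sub>R h) \<bullet> h)) (at t)" for t
  proof -
    have "((\<lambda>t. y + t *\<^sub>R h) has_derivative (\<lambda>s. s *\<^sub>R h)) (at t)"
      by (auto intro!: derivative_eq_intros)
    from has_derivative_compose[OF this grad]
    have "((\<lambda>t. f (y + t *\<^sub>R h)) has_derivative (\<lambda>s. s * (gf (y + t *\<^sub>R h) \<bullet> h))) (at t)"
      by simp
    moreover have "(\<lambda>s. s * (gf (y + t *\<^sub>R h) \<bullet> h)) = (*) (gf (y + t *\<^sub>R h) \<bullet> h)"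
      by (rule ext) simp
    ultimately show ?thesis
      by (simp add: has_field_derivative_def)
  qed
  have deriv_\<psi>: "(\<psi> has_real_derivative
      (gf (y + t *\<^sub>R h) \<bullet> h - gf y \<bullet> h - L * t * (norm h)\<^sup>2)) (at t)" for t
    unfolding \<psi>_def by (rule derivative_eq_intros deriv_line refl | simp)+
  have "\<psi> 1 \<le> \<psi> 0"
  proof (rule DERIV_nonpos_imp_nonincreasing[of 0 1 \<psi>])
    fix t :: real assume t: "0 \<le> t" "t \<le> 1"
    have "gf (y + t *\<^sub>R h) \<bullet> h - gf y \<bullet> h = (gf (y + t *\<^sub>R h) - gf y) \<bullet> h"
      by (simp add: inner_diff_left)
    also have "\<dots> \<le> norm (gf (y + t *\<^sub>R h) - gf y) * norm h"
      by (rule norm_cauchy_schwarz)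
    also have "\<dots> \<le> L * norm (t *\<^sub>R h) * norm h"
      using lip[of "y + t *\<^sub>R h" y] by (simp add: mult_right_mono)
    also have "\<dots> = L * t * (norm h)\<^sup>2"
      using t by (simp add: power2_eq_square)
    finally show "\<exists>z. (\<psi> has_real_derivative z) (at t) \<and> z \<le> 0"
      using deriv_\<psi> by force
  qed simp
  then show ?thesis unfolding \<psi>_def by simp
qed

lemma armijo_failure_curvature:
  fixes f :: "'a::real_inner \<Rightarrow> real" and gf :: "'a \<Rightarrow> 'a"
  assumes grad: "\<And>y. (f has_derivative (\<lambda>h. gf y \<bullet> h)) (at y)"
    and lip: "\<And>y z. norm (gf y - gf z) \<le> L * norm (y - z)"
    and t: "t > 0" and nu: "nu \<ge> 0"
    and fail: "f y + rho * t * (gf y \<bullet> d) + nu < f (y + t *\<^sub>R d)"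
  shows "2 * (1 - rho) * - (gf y \<bullet> d) < L * t * (norm d)\<^sup>2"
proof -
  have "f (y + t *\<^sub>R d) \<le> f y + t * (gf y \<bullet> d) + L / 2 * t\<^sup>2 * (norm d)\<^sup>2"
    using descent_lemma[OF grad lip, of y "t *\<^sub>R d"] by (simp add: power_mult_distrib)
  with fail nu have "t * (2 * (1 - rho) * - (gf y \<bullet> d)) < t * (L * t * (norm d)\<^sup>2)"
    by (simp add: power2_eq_square algebra_simps)
  with t show ?thesis
    using mult_less_cancel_left_pos by blast
qed

lemma armijo_failure_imp_step_large:
  fixes f :: "'a::real_inner \<Rightarrow> real" and gf :: "'a \<Rightarrow> 'a"
  assumes grad: "\<And>y. (f has_derivative (\<lambda>h. gf y \<bullet> h)) (at y)"
    and lip: "\<And>y z. norm (gf y - gf z) \<le> L * norm (y - z)"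
    and L: "L > 0" and rho: "rho < 1" and c2: "c2 > 0"
    and t: "t > 0" and nu: "nu \<ge> 0"
    and fail: "f y + rho * t * (gf y \<bullet> d) + nu < f (y + t *\<^sub>R d)"
    and angle: "gf y \<bullet> d \<le> - c1 * (norm (gf y))\<^sup>2"
    and length: "norm d \<le> c2 * norm (gf y)"
    and nonstationary: "gf y \<noteq> 0"
  shows "2 * (1 - rho) * c1 / (L * c2\<^sup>2) < t"
proof -
  have "2 * (1 - rho) * (c1 * (norm (gf y))\<^sup>2) \<le> 2 * (1 - rho) * - (gf y \<bullet> d)"
    using angle rho by (intro mult_left_mono) auto
  also have "\<dots> < L * t * (norm d)\<^sup>2"
    by (rule armijo_failure_curvature[OF grad lip t nu fail])
  also have "\<dots> \<le> L * t * (c2 * norm (gf y))\<^sup>2"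
    using length L t by (intro mult_left_mono power_mono) auto
  finally have "2 * (1 - rho) * c1 * (norm (gf y))\<^sup>2 < (L * t * c2\<^sup>2) * (norm (gf y))\<^sup>2"
    by (simp add: power_mult_distrib mult_ac)
  then have "2 * (1 - rho) * c1 < L * c2\<^sup>2 * t"
    using nonstationary by (simp add: mult_ac)
  then show ?thesis
    using L c2 by (simp add: pos_divide_less_eq mult.commute)
qed

lemma armijo_sufficient_decrease:
  fixes f :: "'a::real_inner \<Rightarrow> real" and g d :: 'a
  assumes armijo: "f (y + t *\<^sub>R d) \<le> f y + rho * t * (g \<bullet> d) + nu"
    and angle: "g \<bullet> d \<le> - c1 * (norm g)\<^sup>2"
    and rho: "rho > 0" and t: "t > 0" and \<kappa>: "\<kappa> \<le> rho * c1 * t"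
  shows "f (y + t *\<^sub>R d) \<le> f y - \<kappa> * (norm g)\<^sup>2 + nu"
proof -
  have "\<kappa> * (norm g)\<^sup>2 \<le> rho * t * (c1 * (norm g)\<^sup>2)"
    using mult_right_mono[OF \<kappa>, of "(norm g)\<^sup>2"] by (simp add: mult_ac)
  also have "\<dots> \<le> - (rho * t * (g \<bullet> d))"
    using mult_left_mono[OF angle, of "rho * t"] rho t by simp
  finally show ?thesis using armijo by simp
qed

lemma backtracking_step_sizes_bounded_below:
  fixes alpha :: "nat \<Rightarrow> real" and l :: "nat \<Rightarrow> nat"
  assumes beta: "0 < beta" "beta < 1"
    and alpha_pos: "\<And>k. alpha k > 0"
    and alpha_Suc: "\<And>k. alpha (Suc k) = alpha k * beta ^ l k / beta"
    and rejected_large: "\<And>k. 0 < l k \<Longrightarrow> M < alpha k * beta ^ (l k - 1)"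
  shows "min (alpha 0) M \<le> alpha k"
proof (induction k)
  case (Suc k)
  show ?case
  proof (cases "l k")
    case 0
    have "alpha k \<le> alpha k / beta"
      using alpha_pos[of k] beta by (simp add: le_divide_eq)
    with Suc 0 show ?thesis by (simp add: alpha_Suc)
  next
    case (Suc j)
    with rejected_large[of k] beta show ?thesis by (simp add: alpha_Suc)
  qed
qed simp

lemma card_threshold_le_partial_sum_bound:
  fixes w :: "nat \<Rightarrow> real"
  assumes nonneg: "\<And>i. w i \<ge> 0" and bound: "\<And>N. (\<Sum>i<N. w i) \<le> B" and c: "c > 0"
  shows "finite {i. c \<le> w i}" and "real (card {i. c \<le> w i}) * c \<le> B"
proof -
  have "w \<longlonglongrightarrow> 0"
    by (rule summable_LIMSEQ_zero summableI_nonneg_bounded nonneg bound)+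
  from order_tendstoD(2)[OF this c] obtain N where "\<forall>i\<ge>N. w i < c"
    by (auto simp: eventually_sequentially)
  then have sub: "{i. c \<le> w i} \<subseteq> {..<N}"
    by (auto simp: not_le[symmetric])
  then show fin: "finite {i. c \<le> w i}"
    by (rule finite_subset) simp
  have "real (card {i. c \<le> w i}) * c = (\<Sum>i\<in>{i. c \<le> w i}. c)"
    by simp
  also have "\<dots> \<le> (\<Sum>i\<in>{i. c \<le> w i}. w i)"
    by (rule sum_mono) simp
  also have "\<dots> \<le> (\<Sum>i<N. w i)"
    using sub nonneg by (intro sum_mono2) auto
  also have "\<dots> \<le> B"
    by (rule bound)
  finally show "real (card {i. c \<le> w i}) * c \<le> B" .
qed

lemma telescoping_decrease:
  fixes F a b :: "nat \<Rightarrow> real"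
  assumes "\<And>k. F (Suc k) \<le> F k - a k + b k"
  shows "F N + (\<Sum>i<N. a i) \<le> F 0 + (\<Sum>i<N. b i)"
proof (induction N)
  case (Suc N)
  with assms[of N] show ?case by simp
qed simp

lemma sufficient_decrease_complexity:
  fixes F g \<nu> :: "nat \<Rightarrow> real"
  assumes \<kappa>: "\<kappa> > 0" and \<epsilon>: "\<epsilon> > 0"
    and lower: "\<And>k. F k \<ge> flow"
    and decrease: "\<And>k. F (Suc k) \<le> F k - \<kappa> * (g k)\<^sup>2 + \<nu> k"
    and \<nu>_nonneg: "\<And>k. \<nu> k \<ge> 0"
    and \<nu>_small: "\<And>k. k1 \<le> k \<Longrightarrow> \<nu> k \<le> \<kappa> / 2 * (g k)\<^sup>2"
  shows "finite {k. g k > \<epsilon>}"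
    and "real (card {k. g k > \<epsilon>})
      \<le> real k1 + (2 * (F 0 - flow + (\<Sum>i<k1. \<nu> i)) / \<kappa>) * \<epsilon> powi (-2)"
proof -
  define w where "w i = (if k1 \<le> i then (g i)\<^sup>2 else 0)" for i
  define h where "h i = (if i < k1 then \<nu> i else 0)" for i
  define B where "B = 2 * (F 0 - flow + (\<Sum>i<k1. \<nu> i)) / \<kappa>"
  have "F (Suc k) \<le> F k - \<kappa> / 2 * w k + h k" for k
  proof (cases "k1 \<le> k")
    case True
    with decrease[of k] \<nu>_small[of k] show ?thesis by (simp add: w_def h_def)
  next
    case False
    have "0 \<le> \<kappa> * (g k)\<^sup>2"
      using \<kappa> by simp
    with False decrease[of k] show ?thesis
      by (simp add: w_def h_def)
  qed
  then have telescoped: "F N + (\<Sum>i<N. \<kappa> / 2 * w i) \<le> F 0 + (\<Sum>i<N. h i)" for N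
    by (rule telescoping_decrease)
  have h_sum: "(\<Sum>i<N. h i) \<le> (\<Sum>i<k1. \<nu> i)" for N
  proof -
    have "(\<Sum>i<N. h i) \<le> (\<Sum>i<N + k1. h i)"
      using \<nu>_nonneg by (intro sum_mono2) (auto simp: h_def)
    also have "\<dots> = (\<Sum>i<k1. h i)"
      by (rule sum.mono_neutral_right) (auto simp: h_def)
    finally show ?thesis by (simp add: h_def)
  qed
  have w_sum: "(\<Sum>i<N. w i) \<le> B" for N
  proof -
    have "\<kappa> / 2 * (\<Sum>i<N. w i) \<le> F 0 - flow + (\<Sum>i<k1. \<nu> i)"
      using telescoped[of N] h_sum[of N] lower[of N] by (simp add: sum_distrib_left)
    with \<kappa> show ?thesis by (simp add: B_def field_simps)
  qed
  have \<epsilon>2: "\<epsilon>\<^sup>2 > 0" using \<epsilon> by simp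
  have large: "finite {i. \<epsilon>\<^sup>2 \<le> w i}" "real (card {i. \<epsilon>\<^sup>2 \<le> w i}) * \<epsilon>\<^sup>2 \<le> B"
    using card_threshold_le_partial_sum_bound[OF _ w_sum \<epsilon>2] by (auto simp: w_def)
  have sub: "{k. g k > \<epsilon>} \<subseteq> {..<k1} \<union> {i. \<epsilon>\<^sup>2 \<le> w i}"
    using \<epsilon> by (auto simp: w_def intro!: power_mono)
  then show "finite {k. g k > \<epsilon>}"
    by (rule finite_subset) (simp add: large)
  have "card {k. g k > \<epsilon>} \<le> card ({..<k1} \<union> {i. \<epsilon>\<^sup>2 \<le> w i})"
    using sub large by (intro card_mono) auto
  also have "\<dots> \<le> k1 + card {i. \<epsilon>\<^sup>2 \<le> w i}"
    using card_Un_le[of "{..<k1}"] by simp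
  finally have "real (card {k. g k > \<epsilon>}) \<le> real k1 + real (card {i. \<epsilon>\<^sup>2 \<le> w i})"
    by linarith
  moreover have "real (card {i. \<epsilon>\<^sup>2 \<le> w i}) \<le> B * \<epsilon> powi (-2)"
    using large(2) \<epsilon>2 by (simp add: power_int_minus_divide pos_le_divide_eq)
  ultimately show "real (card {k. g k > \<epsilon>}) \<le> real k1 + B * \<epsilon> powi (-2)"
    by linarith
qed

theorem lemma3:
  fixes f :: "'a::{real_inner, complete_space} \<Rightarrow> real"
    and gf :: "'a \<Rightarrow> 'a"
    and x d :: "nat \<Rightarrow> 'a"
    and alpha :: "nat \<Rightarrow> real"
    and l :: "nat \<Rightarrow> nat"
    and nu :: "nat \<Rightarrow> nat \<Rightarrow> real"
    and x0 :: 'a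
    and alpha0 beta rho L flow c1 c2 :: real
  assumes grad: "\<And>y. (f has_derivative (\<lambda>h. gf y \<bullet> h)) (at y)"
    and alpha0: "alpha0 > 0" and beta: "0 < beta" "beta < 1" and rho: "0 < rho" "rho < 1"
    and x_0: "x 0 = x0" and alpha_0: "alpha 0 = alpha0"
    and descent: "\<And>k. gf (x k) \<bullet> d k < 0"
    and nu_nonneg: "\<And>k j. nu k j \<ge> 0"
    and armijo: "\<And>k. f (x k + (alpha k * beta ^ l k) *\<^sub>R d k)
        \<le> f (x k) + rho * alpha k * beta ^ l k * (gf (x k) \<bullet> d k) + nu k (l k)"
    and first: "\<And>k j. j < l k \<Longrightarrow> \<not> (f (x k + (alpha k * beta ^ j) *\<^sub>R d k)
        \<le> f (x k) + rho * alpha k * beta ^ j * (gf (x k) \<bullet> d k) + nu k j)"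
    and x_Suc: "\<And>k. x (Suc k) = x k + (alpha k * beta ^ l k) *\<^sub>R d k"
    and alpha_Suc: "\<And>k. alpha (Suc k) = alpha k * beta powi (int (l k) - 1)"
    and A1: "L > 0" "\<And>y z. norm (gf y - gf z) \<le> L * norm (y - z)"
    and A2: "\<And>y. f y \<ge> flow"
    and A3: "c1 > 0" "c2 > 0"
      "\<And>k. gf (x k) \<bullet> d k \<le> - c1 * (norm (gf (x k)))\<^sup>2"
      "\<And>k. norm (d k) \<le> c2 * norm (gf (x k))"
    and A4': "\<And>\<delta>. \<delta> > 0 \<Longrightarrow> \<exists>n. \<forall>k\<ge>n. nu k (l k) \<le> \<delta> * (norm (gf (x k)))\<^sup>2"
  shows "\<forall>\<epsilon>>0.
    (let \<kappa> = min (rho * beta * alpha0 * c1) (2 * beta * rho * (1 - rho) * c1\<^sup>2 / (L * c2\<^sup>2));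
         k1 = (LEAST n. \<forall>k\<ge>n. nu k (l k) \<le> (\<kappa> / 2) * (norm (gf (x k)))\<^sup>2);
         \<Omega> = {k. norm (gf (x k)) > \<epsilon>}
     in finite \<Omega> \<and>
        real (card \<Omega>) \<le> real k1
          + (2 * (f x0 - flow + (\<Sum>i<k1. nu i (l i))) / \<kappa>) * \<epsilon> powi (-2))"
proof -
  define M where "M = 2 * (1 - rho) * c1 / (L * c2\<^sup>2)"
  define \<kappa> where "\<kappa> = min (rho * beta * alpha0 * c1) (2 * beta * rho * (1 - rho) * c1\<^sup>2 / (L * c2\<^sup>2))"
  define k1 where "k1 = (LEAST n. \<forall>k\<ge>n. nu k (l k) \<le> (\<kappa> / 2) * (norm (gf (x k)))\<^sup>2)"
  have M_pos: "M > 0"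
    using rho A1(1) A3(1,2) by (simp add: M_def)
  have \<kappa>_eq: "\<kappa> = rho * beta * c1 * min alpha0 M"
    using rho beta A3(1) by (simp add: \<kappa>_def M_def min_mult_distrib_left power2_eq_square mult_ac)
  have \<kappa>_pos: "\<kappa> > 0"
    using rho beta A3(1) alpha0 M_pos by (simp add: \<kappa>_eq)
  have alpha_Suc': "alpha (Suc k) = alpha k * beta ^ l k / beta" for k
    using alpha_Suc[of k] beta power_int_diff[of beta "int (l k)" 1] by simp
  have alpha_pos: "alpha k > 0" for k
    using alpha_0 alpha0 beta by (induction k) (simp_all add: alpha_Suc')
  have rejected_large: "M < alpha k * beta ^ (l k - 1)" if "0 < l k" for k
    unfolding M_def using first[of "l k - 1" k] that descent[of k] alpha_pos[of k] beta
    by (intro armijo_failure_imp_step_large[OF grad A1(2) A1(1) rho(2) A3(2) _ nu_nonneg _ A3(3,4)])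
      (auto simp: not_le mult.assoc)
  have alpha_lower: "min alpha0 M \<le> alpha k" for k
    using backtracking_step_sizes_bounded_below[where alpha = alpha and l = l,
        OF beta alpha_pos alpha_Suc' rejected_large] alpha_0
    by simp
  have decrease: "f (x (Suc k)) \<le> f (x k) - \<kappa> * (norm (gf (x k)))\<^sup>2 + nu k (l k)" for k
  proof -
    have "alpha k * beta ^ l k = beta * alpha (Suc k)"
      using beta by (simp add: alpha_Suc')
    then have "\<kappa> \<le> rho * c1 * (alpha k * beta ^ l k)"
      using alpha_lower[of "Suc k"] rho beta A3(1) by (simp add: \<kappa>_eq mult_left_mono mult_ac)
    with armijo[of k] show ?thesis
      using rho alpha_pos[of k] beta A3(3)[of k]
      by (simp add: x_Suc armijo_sufficient_decrease mult.assoc)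
  qed
  have k1: "\<forall>k\<ge>k1. nu k (l k) \<le> (\<kappa> / 2) * (norm (gf (x k)))\<^sup>2"
    unfolding k1_def by (rule LeastI_ex) (use A4'[of "\<kappa> / 2"] \<kappa>_pos in auto)
  note complexity = sufficient_decrease_complexity[where F = "\<lambda>k. f (x k)"
      and g = "\<lambda>k. norm (gf (x k))" and \<nu> = "\<lambda>k. nu k (l k)",
      OF \<kappa>_pos _ A2 decrease nu_nonneg, of _ k1]
  from complexity k1 show ?thesis
    unfolding Let_def \<kappa>_def[symmetric] k1_def[symmetric] x_0 by simp
qed

end
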